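(* Let $N\ge2$, $\zeta(t)=\max\{t,t^N\}$ for $t\ge0$, $\Phi_1(t)=\exp(|t|^{N/(N-1)})-\sum_{j=0}^{N-2}\frac{|t|^{Nj/(N-1)}}{j!}$, and let $\tilde\Phi_1(s)=\sup_{t\ge0}\{st-\Phi_1(t)\}$ ($s\ge0$) be its conjugate function. Then (i) $\tilde\Phi_1\big(\Phi_1(r)/r\big)\le\Phi_1(r)$ for all $r>0$; (ii) $\tilde\Phi_1(tr)\le\zeta(t)\tilde\Phi_1(r)$ for all $t,r\ge0$. Consequently $\tilde\Phi_1$ satisfies the $\Delta_2$-condition and $E_{\tilde\Phi_1}(\mathbb{R}^N)=L^{\tilde\Phi_1}(\mathbb{R}^N)$.
   Context: An $N$-function is a continuous, convex, even $\Theta:\mathbb{R}\to[0,\infty)$ with $\Theta(t)=0$ iff $t=0$, $\Theta(t)/t\to0$ as $t\to0$ and $\Theta(t)/t\to\infty$ as $t\to\infty$. $\Theta$ satisfies the $\Delta_2$-condition if $\Theta(2t)\le C\Theta(t)$ for all $t\ge0$ and some $C>0$. The Orlicz space $L^\Theta(\mathbb{R}^N)=\{u\in L^1_{loc}(\mathbb{R}^N):\int\Theta(|u|/\lambda)dx<\infty\text{ for some }\lambda>0\}$ carries the Luxemburg norm $\|u\|_\Theta=\inf\{\lambda>0:\int\Theta(|u|/\lambda)dx\le1\}$, and $E_\Theta(\mathbb{R}^N)$ is the closure in $L^\Theta(\mathbb{R}^N)$ of the functions with bounded support. *)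

theory Defs
  imports "HOL-Analysis.Analysis"
begin

definition zeta :: "nat \<Rightarrow> real \<Rightarrow> real" where
  "zeta N t = max t (t ^ N)"

text \<open>The power |t|^(Nj/(N-1)) is written as (|t|^(N/(N-1)))^j so that the j = 0 term is 1
  also at t = 0 (in Isabelle, 0 powr 0 = 0).\<close>
definition Phi1 :: "nat \<Rightarrow> real \<Rightarrow> real" where
  "Phi1 N t = exp (\<bar>t\<bar> powr (real N / (real N - 1)))
      - (\<Sum>j = 0..N - 2. (\<bar>t\<bar> powr (real N / (real N - 1))) ^ j / fact j)"

definition Phi1_conj :: "nat \<Rightarrow> real \<Rightarrow> real" where
  "Phi1_conj N s = (SUP t\<in>{0..}. s * t - Phi1 N t)"

definition Delta2 :: "(real \<Rightarrow> real) \<Rightarrow> bool" where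
  "Delta2 \<Theta> \<longleftrightarrow> (\<exists>C>0. \<forall>t\<ge>0. \<Theta> (2 * t) \<le> C * \<Theta> t)"

definition loc_integrable :: "('a::euclidean_space \<Rightarrow> real) \<Rightarrow> bool" where
  "loc_integrable u \<longleftrightarrow> u \<in> borel_measurable lebesgue \<and>
     (\<forall>K. compact K \<longrightarrow> set_integrable lebesgue K u)"

definition orlicz_modular :: "(real \<Rightarrow> real) \<Rightarrow> ('a::euclidean_space \<Rightarrow> real) \<Rightarrow> real \<Rightarrow> ennreal" where
  "orlicz_modular \<Theta> u c = (\<integral>\<^sup>+ x. ennreal (\<Theta> (\<bar>u x\<bar> / c)) \<partial>lebesgue)"

definition orlicz_L :: "(real \<Rightarrow> real) \<Rightarrow> ('a::euclidean_space \<Rightarrow> real) set" where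
  "orlicz_L \<Theta> = {u. loc_integrable u \<and> (\<exists>c>0. orlicz_modular \<Theta> u c < \<infinity>)}"

definition luxemburg :: "(real \<Rightarrow> real) \<Rightarrow> ('a::euclidean_space \<Rightarrow> real) \<Rightarrow> real" where
  "luxemburg \<Theta> u = Inf {c. c > 0 \<and> orlicz_modular \<Theta> u c \<le> 1}"

definition orlicz_E :: "(real \<Rightarrow> real) \<Rightarrow> ('a::euclidean_space \<Rightarrow> real) set" where
  "orlicz_E \<Theta> = {u \<in> orlicz_L \<Theta>. \<forall>\<epsilon>>0. \<exists>v\<in>orlicz_L \<Theta>.
       bounded {x. v x \<noteq> 0} \<and> luxemburg \<Theta> (\<lambda>x. u x - v x) < \<epsilon>}"

end

theory Submission
  imports Defs
begin

text \<open>
  \<open>\<Phi>\<^sub>1(t)\<close> is the tail, from the index \<open>N - 1\<close> on, of the exponential series at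
  \<open>x = |t| powr (N/(N-1))\<close>; hence it is superhomogeneous of degree \<open>N\<close>:
  \<open>\<Phi>\<^sub>1(m s) \<ge> m\<^sup>N \<Phi>\<^sub>1(s)\<close> for \<open>m \<ge> 1\<close>. For any nonnegative \<open>\<Phi>\<close> superhomogeneous of
  degree \<open>p \<ge> 2\<close> the conjugate \<open>\<Phi>\<^sup>*\<close> is finite and \<open>\<Phi>(r)/r\<close> is nondecreasing,
  which gives (i). Substituting \<open>t = a \<sigma>\<close> in the supremum defining \<open>\<Phi>\<^sup>*(a s)\<close> gives
  \<open>\<Phi>\<^sup>*(a s) \<le> a\<^sup>p \<Phi>\<^sup>*(s)\<close> for \<open>a \<ge> 1\<close>, while \<open>\<Phi>\<^sup>*(a s) \<le> a \<Phi>\<^sup>*(s)\<close> for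
  \<open>a \<le> 1\<close> is immediate; \<open>a = 2\<close> gives \<open>\<Delta>\<^sub>2\<close>.
  Under \<open>\<Delta>\<^sub>2\<close> the modular of \<open>u \<in> L\<^sup>\<Theta>\<close> is finite at every scale \<open>\<delta>\<close>, so by
  monotone convergence its part outside a large ball is at most 1, i.e. the truncation of \<open>u\<close>
  to that ball is \<open>\<delta>\<close>-close to \<open>u\<close> in the Luxemburg norm.
\<close>

definition exp_tail :: "nat \<Rightarrow> real \<Rightarrow> real" where
  "exp_tail M x = (\<Sum>n. x ^ (n + M) / fact (n + M))"

lemma summable_exp_tail: "summable (\<lambda>n. x ^ (n + M) / fact (n + M) :: real)"
proof -
  have "summable (\<lambda>n. x ^ n / fact n :: real)"
    using summable_exp[of x] by (simp add: field_simps)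
  then show ?thesis
    using summable_iff_shift[of "\<lambda>n. x ^ n / fact n" M] by simp
qed

lemma exp_eq_exp_tail_plus_sum: "exp x = exp_tail M x + (\<Sum>j<M. x ^ j / fact j)"
proof -
  have "summable (\<lambda>n. x ^ n / fact n :: real)"
    using summable_exp[of x] by (simp add: field_simps)
  moreover have "exp x = (\<Sum>n. x ^ n / fact n)"
    by (simp add: exp_def field_simps scaleR_conv_of_real)
  ultimately show ?thesis
    unfolding exp_tail_def by (simp add: suminf_split_initial_segment[of _ M])
qed

lemma exp_tail_ge_leading_term:
  assumes "x \<ge> 0" shows "x ^ M / fact M \<le> exp_tail M x"
  using sum_le_suminf[OF summable_exp_tail, of "{0}" x M] assms
  unfolding exp_tail_def by simp

lemma exp_tail_nonneg: "x \<ge> 0 \<Longrightarrow> 0 \<le> exp_tail M x"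
  using exp_tail_ge_leading_term[of x M] by (meson order_trans divide_nonneg_nonneg zero_le_power fact_ge_zero)

lemma exp_tail_zero: "M \<ge> 1 \<Longrightarrow> exp_tail M 0 = 0"
  by (simp add: exp_tail_def power_0_left)

lemma exp_tail_superhomogeneous:
  assumes "x \<ge> 0" "m \<ge> 1"
  shows "m ^ M * exp_tail M x \<le> exp_tail M (m * x)"
proof -
  have "m ^ M * (x ^ (n + M) / fact (n + M)) \<le> (m * x) ^ (n + M) / fact (n + M)" for n
  proof -
    have "m ^ M \<le> m ^ (n + M)" using assms by (simp add: power_increasing)
    then show ?thesis
      using assms by (simp add: power_mult_distrib divide_right_mono mult_right_mono)
  qed
  then have "(\<Sum>n. m ^ M * (x ^ (n + M) / fact (n + M))) \<le> exp_tail M (m * x)"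
    unfolding exp_tail_def by (intro suminf_le summable_mult summable_exp_tail)
  moreover have "m ^ M * exp_tail M x = (\<Sum>n. m ^ M * (x ^ (n + M) / fact (n + M)))"
    unfolding exp_tail_def by (rule suminf_mult[OF summable_exp_tail, symmetric])
  ultimately show ?thesis by simp
qed

lemma powr_conjugate_exponent_power:
  assumes "N \<ge> 2" "(t::real) \<ge> 0"
  shows "(t powr (real N / (real N - 1))) ^ (N - 1) = t ^ N"
proof (cases "t = 0")
  case True
  then show ?thesis using assms by (simp add: power_0_left)
next
  case False
  then have "t > 0" using assms by simp
  have "real N / (real N - 1) * real (N - 1) = real N"
    using assms by (simp add: of_nat_diff)
  then show ?thesis
    using \<open>t > 0\<close> by (simp add: powr_realpow[symmetric] powr_powr)
qed

lemma Phi1_eq_exp_tail: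
  assumes "N \<ge> 2"
  shows "Phi1 N t = exp_tail (N - 1) (\<bar>t\<bar> powr (real N / (real N - 1)))"
proof -
  have "{0..N - 2} = {..<N - 1}" using assms by auto
  then show ?thesis
    unfolding Phi1_def using exp_eq_exp_tail_plus_sum[of _ "N - 1"] by simp
qed

lemma Phi1_nonneg: "N \<ge> 2 \<Longrightarrow> 0 \<le> Phi1 N t"
  by (simp add: Phi1_eq_exp_tail exp_tail_nonneg)

lemma Phi1_zero: "N \<ge> 2 \<Longrightarrow> Phi1 N 0 = 0"
  by (simp add: Phi1_eq_exp_tail exp_tail_zero)

lemma Phi1_ge_power:
  assumes "N \<ge> 2" "t \<ge> 0"
  shows "t ^ N / fact (N - 1) \<le> Phi1 N t"
  using exp_tail_ge_leading_term[of "t powr (real N / (real N - 1))" "N - 1"]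
    powr_conjugate_exponent_power[OF assms]
  by (simp add: Phi1_eq_exp_tail assms)

lemma Phi1_superhomogeneous:
  assumes "N \<ge> 2" "m \<ge> 1" "s \<ge> 0"
  shows "m ^ N * Phi1 N s \<le> Phi1 N (m * s)"
proof -
  let ?a = "real N / (real N - 1)"
  have "\<bar>m * s\<bar> powr ?a = m powr ?a * s powr ?a"
    using assms by (simp add: powr_mult)
  moreover have "m powr ?a \<ge> 1"
    using assms by (simp add: ge_one_powr_ge_zero)
  ultimately have "(m powr ?a) ^ (N - 1) * exp_tail (N - 1) (s powr ?a)
      \<le> exp_tail (N - 1) (\<bar>m * s\<bar> powr ?a)"
    using exp_tail_superhomogeneous[of "s powr ?a" "m powr ?a" "N - 1"] by simp
  then show ?thesis
    using assms powr_conjugate_exponent_power[OF assms(1), of m] by (simp add: Phi1_eq_exp_tail)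
qed

definition young_conj :: "(real \<Rightarrow> real) \<Rightarrow> real \<Rightarrow> real" where
  "young_conj \<Phi> s = (SUP t\<in>{0..}. s * t - \<Phi> t)"

lemma Phi1_conj_eq_young_conj: "Phi1_conj N = young_conj (Phi1 N)"
  by (simp add: fun_eq_iff Phi1_conj_def young_conj_def)

lemma young_conj_least:
  assumes "\<And>t. t \<ge> 0 \<Longrightarrow> s * t - \<Phi> t \<le> B"
  shows "young_conj \<Phi> s \<le> B"
  unfolding young_conj_def by (rule cSUP_least) (use assms in auto)

locale superhomogeneous =
  fixes \<Phi> :: "real \<Rightarrow> real" and p :: nat
  assumes nonneg: "t \<ge> 0 \<Longrightarrow> 0 \<le> \<Phi> t"
    and zero: "\<Phi> 0 = 0"
    and pos_at_one: "\<Phi> 1 > 0"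
    and exponent_ge_2: "p \<ge> 2"
    and scale: "m \<ge> 1 \<Longrightarrow> s \<ge> 0 \<Longrightarrow> m ^ p * \<Phi> s \<le> \<Phi> (m * s)"
begin

lemma superlinear: "\<bar>s\<bar> \<le> \<Phi> 1 * t \<Longrightarrow> t \<ge> 1 \<Longrightarrow> s * t \<le> \<Phi> t"
proof -
  assume s: "\<bar>s\<bar> \<le> \<Phi> 1 * t" and t: "t \<ge> 1"
  have "s * t \<le> \<bar>s\<bar> * t"
    using t by (simp add: mult_right_mono)
  also have "\<dots> \<le> \<Phi> 1 * t ^ 2"
    using s t by (simp add: power2_eq_square mult_right_mono mult.assoc)
  also have "\<dots> \<le> \<Phi> 1 * t ^ p"
    using t exponent_ge_2 pos_at_one by (simp add: power_increasing)
  also have "\<dots> \<le> \<Phi> t"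
    using scale[of t 1] t by (simp add: mult.commute)
  finally show ?thesis .
qed

lemma bdd_above_young: "bdd_above ((\<lambda>t. s * t - \<Phi> t) ` {0..})"
proof (rule bdd_aboveI2)
  define K where "K = max 1 (\<bar>s\<bar> / \<Phi> 1)"
  fix t :: real assume "t \<in> {0..}"
  then have "t \<ge> 0" by simp
  show "s * t - \<Phi> t \<le> \<bar>s\<bar> * K"
  proof (cases "t \<le> K")
    case True
    then have "s * t \<le> \<bar>s\<bar> * K"
      using \<open>t \<ge> 0\<close> by (metis abs_ge_self abs_ge_zero mult_mono order_trans abs_mult abs_of_nonneg)
    then show ?thesis using nonneg[OF \<open>t \<ge> 0\<close>] by linarith
  next
    case False
    then have "\<bar>s\<bar> / \<Phi> 1 \<le> t" "t \<ge> 1" by (auto simp: K_def)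
    then have "\<bar>s\<bar> \<le> \<Phi> 1 * t" "t \<ge> 1"
      using pos_at_one by (auto simp: pos_divide_le_eq mult.commute)
    then have "s * t \<le> \<Phi> t" by (rule superlinear)
    moreover have "0 \<le> \<bar>s\<bar> * K" unfolding K_def by simp
    ultimately show ?thesis by linarith
  qed
qed

lemma young_inequality: "t \<ge> 0 \<Longrightarrow> s * t - \<Phi> t \<le> young_conj \<Phi> s"
  unfolding young_conj_def by (rule cSUP_upper[OF _ bdd_above_young]) auto

lemma young_conj_nonneg: "0 \<le> young_conj \<Phi> s"
  using young_inequality[of 0 s] by (simp add: zero)

lemma young_conj_zero: "young_conj \<Phi> 0 = 0"
  using young_conj_least[of 0 \<Phi> 0] nonneg young_conj_nonneg[of 0] by force

lemma mono_young_conj: "mono (young_conj \<Phi>)"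
proof (rule monoI)
  fix a b :: real assume "a \<le> b"
  show "young_conj \<Phi> a \<le> young_conj \<Phi> b"
  proof (rule young_conj_least)
    fix t :: real assume "t \<ge> 0"
    then have "a * t \<le> b * t" using \<open>a \<le> b\<close> by (simp add: mult_right_mono)
    then show "a * t - \<Phi> t \<le> young_conj \<Phi> b"
      using young_inequality[OF \<open>t \<ge> 0\<close>, of b] by linarith
  qed
qed

lemma young_conj_quotient_le:
  assumes "r > 0"
  shows "young_conj \<Phi> (\<Phi> r / r) \<le> \<Phi> r"
proof (rule young_conj_least)
  fix t :: real assume "t \<ge> 0"
  have "\<Phi> r / r * t \<le> \<Phi> r + \<Phi> t"
  proof (cases "t \<le> r")
    case True
    then have "\<Phi> r / r * t \<le> \<Phi> r / r * r"
      using nonneg[of r] assms by (intro mult_left_mono) auto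
    then show ?thesis using assms nonneg[OF \<open>t \<ge> 0\<close>] by simp
  next
    case False
    define m where "m = t / r"
    have "m \<ge> 1" "m * r = t" using False assms by (auto simp: m_def)
    have "m \<le> m ^ p"
      using \<open>m \<ge> 1\<close> exponent_ge_2 by (metis power_one_right power_increasing le_trans one_le_numeral)
    then have "m * \<Phi> r \<le> m ^ p * \<Phi> r"
      using nonneg[of r] assms by (simp add: mult_right_mono)
    also have "\<dots> \<le> \<Phi> t"
      using scale[OF \<open>m \<ge> 1\<close>, of r] assms \<open>m * r = t\<close> by simp
    finally have "\<Phi> r / r * t \<le> \<Phi> t"
      using assms by (simp add: m_def field_simps)
    then show ?thesis using nonneg[of r] assms by linarith
  qed
  then show "\<Phi> r / r * t - \<Phi> t \<le> \<Phi> r" by linarith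
qed

lemma young_conj_scale_le_one:
  assumes "0 \<le> a" "a \<le> 1"
  shows "young_conj \<Phi> (a * s) \<le> a * young_conj \<Phi> s"
proof (rule young_conj_least)
  fix t :: real assume "t \<ge> 0"
  have "a * \<Phi> t \<le> \<Phi> t"
    using assms nonneg[OF \<open>t \<ge> 0\<close>] by (simp add: mult_left_le_one_le)
  moreover have "a * (s * t - \<Phi> t) \<le> a * young_conj \<Phi> s"
    using young_inequality[OF \<open>t \<ge> 0\<close>, of s] assms by (simp add: mult_left_mono)
  ultimately show "a * s * t - \<Phi> t \<le> a * young_conj \<Phi> s"
    by (simp add: algebra_simps)
qed

lemma young_conj_scale_ge_one:
  assumes "a \<ge> 1" "s \<ge> 0"
  shows "young_conj \<Phi> (a * s) \<le> a ^ p * young_conj \<Phi> s"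
proof (rule young_conj_least)
  fix t :: real assume "t \<ge> 0"
  define \<sigma> where "\<sigma> = t / a"
  have "\<sigma> \<ge> 0" and t: "t = a * \<sigma>"
    unfolding \<sigma>_def using \<open>t \<ge> 0\<close> assms by auto
  have "a ^ 2 \<le> a ^ p"
    using assms exponent_ge_2 by (simp add: power_increasing)
  then have "a ^ 2 * (s * \<sigma>) \<le> a ^ p * (s * \<sigma>)"
    using \<open>\<sigma> \<ge> 0\<close> assms by (simp add: mult_right_mono)
  moreover have "a * s * t = a ^ 2 * (s * \<sigma>)"
    using t by (simp add: power2_eq_square)
  moreover have "a ^ p * \<Phi> \<sigma> \<le> \<Phi> t"
    using scale[OF \<open>a \<ge> 1\<close> \<open>\<sigma> \<ge> 0\<close>] t by simp
  moreover have "a ^ p * (s * \<sigma> - \<Phi> \<sigma>) \<le> a ^ p * young_conj \<Phi> s"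
    using young_inequality[OF \<open>\<sigma> \<ge> 0\<close>, of s] assms by (simp add: mult_left_mono)
  ultimately show "a * s * t - \<Phi> t \<le> a ^ p * young_conj \<Phi> s"
    by (simp only: right_diff_distrib)
qed

lemma young_conj_scale:
  assumes "a \<ge> 0" "s \<ge> 0"
  shows "young_conj \<Phi> (a * s) \<le> max a (a ^ p) * young_conj \<Phi> s"
proof (cases "a \<le> 1")
  case True
  then have "young_conj \<Phi> (a * s) \<le> a * young_conj \<Phi> s"
    using assms by (simp add: young_conj_scale_le_one)
  then show ?thesis
    using young_conj_nonneg[of s] by (smt (verit) mult_right_mono max.cobounded1)
next
  case False
  then have "young_conj \<Phi> (a * s) \<le> a ^ p * young_conj \<Phi> s"
    using assms by (simp add: young_conj_scale_ge_one)
  then show ?thesis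
    using young_conj_nonneg[of s] by (smt (verit) mult_right_mono max.cobounded2)
qed

lemma Delta2_young_conj: "Delta2 (young_conj \<Phi>)"
  unfolding Delta2_def
proof (intro exI[of _ "2 ^ p"] conjI allI impI)
  fix s :: real assume "s \<ge> 0"
  then show "young_conj \<Phi> (2 * s) \<le> 2 ^ p * young_conj \<Phi> s"
    by (simp add: young_conj_scale_ge_one)
qed simp

end

lemma superhomogeneous_Phi1: "N \<ge> 2 \<Longrightarrow> superhomogeneous (Phi1 N) N"
proof unfold_locales
  assume "N \<ge> 2"
  have "(0::real) < 1 / fact (N - 1)" by simp
  also have "\<dots> \<le> Phi1 N 1"
    using Phi1_ge_power[OF \<open>N \<ge> 2\<close>, of 1] by simp
  finally show "Phi1 N 1 > 0" .
qed (simp_all add: Phi1_nonneg Phi1_zero Phi1_superhomogeneous)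

lemma Delta2_power_bound:
  assumes "Delta2 \<Theta>"
  obtains C where "C > 0" "\<And>k s. s \<ge> 0 \<Longrightarrow> \<Theta> (2 ^ k * s) \<le> C ^ k * \<Theta> s"
proof -
  obtain C where "C > 0" and C: "\<And>t. t \<ge> 0 \<Longrightarrow> \<Theta> (2 * t) \<le> C * \<Theta> t"
    using assms unfolding Delta2_def by blast
  have "\<Theta> (2 ^ k * s) \<le> C ^ k * \<Theta> s" if "s \<ge> 0" for k s
  proof (induction k)
    case 0
    then show ?case by simp
  next
    case (Suc k)
    have "\<Theta> (2 ^ Suc k * s) \<le> C * \<Theta> (2 ^ k * s)"
      using C[of "2 ^ k * s"] \<open>s \<ge> 0\<close> by (simp add: mult.assoc)
    also have "\<dots> \<le> C ^ Suc k * \<Theta> s"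
      using Suc.IH \<open>C > 0\<close> by (simp add: mult_left_mono mult.assoc)
    finally show ?case .
  qed
  with \<open>C > 0\<close> show thesis by (rule that)
qed

lemma Delta2_scale_bound:
  assumes "Delta2 \<Theta>" "mono \<Theta>"
  obtains K where "K > 0" "\<And>s. s \<ge> 0 \<Longrightarrow> \<Theta> (c * s) \<le> K * \<Theta> s"
proof -
  obtain C where "C > 0" and C: "\<And>k s. s \<ge> 0 \<Longrightarrow> \<Theta> (2 ^ k * s) \<le> C ^ k * \<Theta> s"
    using Delta2_power_bound[OF assms(1)] by blast
  obtain k :: nat where "c < 2 ^ k"
    using real_arch_pow[of 2 c] by auto
  have "\<Theta> (c * s) \<le> C ^ k * \<Theta> s" if "s \<ge> 0" for s
  proof -
    have "\<Theta> (c * s) \<le> \<Theta> (2 ^ k * s)"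
      using \<open>c < 2 ^ k\<close> that by (intro monoD[OF assms(2)] mult_right_mono) auto
    also have "\<dots> \<le> C ^ k * \<Theta> s" using C that .
    finally show ?thesis .
  qed
  with \<open>C > 0\<close> show thesis by (intro that[of "C ^ k"]) auto
qed

lemma orlicz_modular_finite_if_Delta2:
  fixes u :: "'a::euclidean_space \<Rightarrow> real"
  assumes "Delta2 \<Theta>" "mono \<Theta>" "\<And>s. 0 \<le> \<Theta> s"
    and u: "u \<in> borel_measurable lebesgue"
    and "c > 0" "\<delta> > 0" and finite: "orlicz_modular \<Theta> u c < \<infinity>"
  shows "orlicz_modular \<Theta> u \<delta> < \<infinity>"
proof -
  have [measurable]: "\<Theta> \<in> borel_measurable borel"
    by (rule borel_measurable_mono[OF assms(2)])
  obtain K where "K > 0" and K: "\<And>s. s \<ge> 0 \<Longrightarrow> \<Theta> (c / \<delta> * s) \<le> K * \<Theta> s"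
    using Delta2_scale_bound[OF assms(1,2)] by blast
  have "\<Theta> (\<bar>u x\<bar> / \<delta>) \<le> K * \<Theta> (\<bar>u x\<bar> / c)" for x
    using K[of "\<bar>u x\<bar> / c"] \<open>c > 0\<close> by simp
  then have "orlicz_modular \<Theta> u \<delta> \<le> (\<integral>\<^sup>+ x. ennreal K * ennreal (\<Theta> (\<bar>u x\<bar> / c)) \<partial>lebesgue)"
    unfolding orlicz_modular_def using \<open>K > 0\<close> assms(3)
    by (intro nn_integral_mono) (simp add: ennreal_mult[symmetric] ennreal_leI)
  also have "\<dots> = ennreal K * orlicz_modular \<Theta> u c"
    unfolding orlicz_modular_def by (rule nn_integral_cmult) (use u in measurable)
  also have "\<dots> < \<infinity>"
    using finite by (simp add: ennreal_mult_less_top)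
  finally show ?thesis .
qed

lemma luxemburg_le:
  assumes "\<delta> > 0" "orlicz_modular \<Theta> u \<delta> \<le> 1"
  shows "luxemburg \<Theta> u \<le> \<delta>"
  unfolding luxemburg_def using assms by (intro cInf_lower) (auto intro: bdd_belowI[of _ 0])

lemma nn_integral_outside_cball_less:
  fixes f :: "'a::euclidean_space \<Rightarrow> ennreal"
  assumes [measurable]: "f \<in> borel_measurable lebesgue"
    and finite: "integral\<^sup>N lebesgue f < \<infinity>" and "e > 0"
  obtains R where "(\<integral>\<^sup>+ x \<in> - cball 0 R. f x \<partial>lebesgue) < e"
proof -
  define g where "g i x = f x * indicator (- cball (0::'a) (real i)) x" for i x
  have [measurable]: "cball (0::'a) r \<in> sets lebesgue" for r
    using lmeasurable_cball fmeasurableD by blast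
  have "AE x in lebesgue. g (Suc i) x \<le> g i x" for i
    by (intro AE_I2) (auto simp: g_def indicator_def)
  moreover have "g i \<in> borel_measurable lebesgue" for i
    unfolding g_def by measurable
  moreover have "integral\<^sup>N lebesgue (g 0) \<le> integral\<^sup>N lebesgue f"
    unfolding g_def by (intro nn_integral_mono) (auto simp: indicator_def)
  with finite have "integral\<^sup>N lebesgue (g 0) < \<infinity>"
    by order
  ultimately have "(INF i. integral\<^sup>N lebesgue (g i)) = (\<integral>\<^sup>+ x. (INF i. g i x) \<partial>lebesgue)"
    by (rule nn_integral_monotone_convergence_INF_AE'[symmetric])
  also have "(\<lambda>x. INF i. g i x) = (\<lambda>x. 0)"
  proof
    fix x :: 'a
    obtain i :: nat where "norm x \<le> real i"
      using real_arch_simple by blast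
    then have "g i x = 0" by (simp add: g_def)
    then have "(INF i. g i x) \<le> 0"
      by (metis INF_lower2 UNIV_I order_refl)
    then show "(INF i. g i x) = 0" by simp
  qed
  finally have "(INF i. integral\<^sup>N lebesgue (g i)) < e"
    using \<open>e > 0\<close> by simp
  then obtain i where "integral\<^sup>N lebesgue (g i) < e"
    by (auto simp: INF_less_iff)
  then show thesis
    unfolding g_def by (rule that)
qed

lemma loc_integrable_indicator_cball_mult:
  fixes u :: "'a::euclidean_space \<Rightarrow> real"
  assumes "loc_integrable u"
  shows "loc_integrable (\<lambda>x. indicator (cball 0 R) x * u x)"
  unfolding loc_integrable_def
proof (intro conjI allI impI)
  have [measurable]: "u \<in> borel_measurable lebesgue" "cball (0::'a) R \<in> sets lebesgue"
    using assms lmeasurable_cball fmeasurableD unfolding loc_integrable_def by blast+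
  show "(\<lambda>x. indicator (cball 0 R) x * u x) \<in> borel_measurable lebesgue"
    by measurable
  fix K :: "'a set" assume "compact K"
  then have "set_integrable lebesgue (K \<inter> cball 0 R) u"
    using assms compact_Int_closed unfolding loc_integrable_def by blast
  moreover have "(\<lambda>x. indicator K x *\<^sub>R (indicator (cball 0 R) x * u x))
      = (\<lambda>x. indicator (K \<inter> cball 0 R) x *\<^sub>R u x)"
    by (auto simp: indicator_def)
  ultimately show "set_integrable lebesgue K (\<lambda>x. indicator (cball 0 R) x * u x)"
    unfolding set_integrable_def by simp
qed

lemma orlicz_L_indicator_cball_mult:
  fixes u :: "'a::euclidean_space \<Rightarrow> real"
  assumes "mono \<Theta>" "u \<in> orlicz_L \<Theta>"
  shows "(\<lambda>x. indicator (cball 0 R) x * u x) \<in> orlicz_L \<Theta>"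
proof -
  obtain c where "c > 0" "orlicz_modular \<Theta> u c < \<infinity>" and "loc_integrable u"
    using assms(2) unfolding orlicz_L_def by blast
  have "\<Theta> (\<bar>indicator (cball 0 R) x * u x\<bar> / c) \<le> \<Theta> (\<bar>u x\<bar> / c)" for x
    using \<open>c > 0\<close> by (intro monoD[OF assms(1)]) (auto simp: indicator_def divide_right_mono)
  then have "orlicz_modular \<Theta> (\<lambda>x. indicator (cball 0 R) x * u x) c \<le> orlicz_modular \<Theta> u c"
    unfolding orlicz_modular_def by (intro nn_integral_mono ennreal_leI)
  with \<open>orlicz_modular \<Theta> u c < \<infinity>\<close> \<open>c > 0\<close> \<open>loc_integrable u\<close> show ?thesis
    unfolding orlicz_L_def by (auto intro: loc_integrable_indicator_cball_mult le_less_trans)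
qed

theorem orlicz_E_eq_L_if_Delta2:
  assumes "Delta2 \<Theta>" "mono \<Theta>" "\<And>s. 0 \<le> \<Theta> s" "\<Theta> 0 = 0"
  shows "orlicz_E \<Theta> = (orlicz_L \<Theta> :: ('a::euclidean_space \<Rightarrow> real) set)"
proof
  show "orlicz_E \<Theta> \<subseteq> orlicz_L \<Theta>" unfolding orlicz_E_def by blast
next
  have [measurable]: "\<Theta> \<in> borel_measurable borel"
    by (rule borel_measurable_mono[OF assms(2)])
  show "orlicz_L \<Theta> \<subseteq> (orlicz_E \<Theta> :: ('a \<Rightarrow> real) set)"
  proof
    fix u :: "'a \<Rightarrow> real" assume "u \<in> orlicz_L \<Theta>"
    then obtain c where "c > 0" "orlicz_modular \<Theta> u c < \<infinity>" and "loc_integrable u"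
      unfolding orlicz_L_def by blast
    then have u_measurable [measurable]: "u \<in> borel_measurable lebesgue"
      unfolding loc_integrable_def by blast
    have "\<exists>v\<in>orlicz_L \<Theta>. bounded {x. v x \<noteq> 0} \<and> luxemburg \<Theta> (\<lambda>x. u x - v x) < \<epsilon>"
      if "\<epsilon> > 0" for \<epsilon>
    proof -
      define \<delta> where "\<delta> = \<epsilon> / 2"
      have "\<delta> > 0" "\<delta> < \<epsilon>" using \<open>\<epsilon> > 0\<close> by (auto simp: \<delta>_def)
      have "(\<lambda>x. ennreal (\<Theta> (\<bar>u x\<bar> / \<delta>))) \<in> borel_measurable lebesgue"
        by measurable
      moreover have "orlicz_modular \<Theta> u \<delta> < \<infinity>"
        using orlicz_modular_finite_if_Delta2[OF assms(1-3) u_measurable \<open>c > 0\<close> \<open>\<delta> > 0\<close>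
            \<open>orlicz_modular \<Theta> u c < \<infinity>\<close>] .
      ultimately obtain R
        where R: "(\<integral>\<^sup>+ x \<in> - cball 0 R. ennreal (\<Theta> (\<bar>u x\<bar> / \<delta>)) \<partial>lebesgue) < 1"
        unfolding orlicz_modular_def by (rule nn_integral_outside_cball_less) auto
      define v where "v x = indicator (cball 0 R) x * u x" for x
      have "orlicz_modular \<Theta> (\<lambda>x. u x - v x) \<delta>
          = (\<integral>\<^sup>+ x \<in> - cball 0 R. ennreal (\<Theta> (\<bar>u x\<bar> / \<delta>)) \<partial>lebesgue)"
        unfolding orlicz_modular_def v_def
        by (intro nn_integral_cong) (auto simp: indicator_def assms(4))
      with R \<open>\<delta> > 0\<close> have "luxemburg \<Theta> (\<lambda>x. u x - v x) \<le> \<delta>"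
        by (intro luxemburg_le) auto
      moreover have "v \<in> orlicz_L \<Theta>"
        unfolding v_def by (rule orlicz_L_indicator_cball_mult[OF assms(2) \<open>u \<in> orlicz_L \<Theta>\<close>])
      moreover have "bounded {x. v x \<noteq> 0}"
        by (rule bounded_subset[OF bounded_cball[of 0 R]]) (auto simp: v_def indicator_def)
      ultimately show ?thesis using \<open>\<delta> < \<epsilon>\<close> by force
    qed
    with \<open>u \<in> orlicz_L \<Theta>\<close> show "u \<in> orlicz_E \<Theta>"
      unfolding orlicz_E_def by blast
  qed
qed

theorem lemma2p5:
  fixes N :: nat
  assumes "N \<ge> 2" and "CARD('n::finite) = N"
  shows "(\<forall>r>0. Phi1_conj N (Phi1 N r / r) \<le> Phi1 N r)
       \<and> (\<forall>t\<ge>0. \<forall>r\<ge>0. Phi1_conj N (t * r) \<le> zeta N t * Phi1_conj N r)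
       \<and> Delta2 (Phi1_conj N)
       \<and> orlicz_E (Phi1_conj N) = (orlicz_L (Phi1_conj N) :: (real^'n \<Rightarrow> real) set)"
proof -
  interpret superhomogeneous "Phi1 N" N
    using superhomogeneous_Phi1[OF assms(1)] .
  have "orlicz_E (young_conj (Phi1 N)) = (orlicz_L (young_conj (Phi1 N)) :: (real^'n \<Rightarrow> real) set)"
    by (intro orlicz_E_eq_L_if_Delta2 Delta2_young_conj mono_young_conj young_conj_nonneg young_conj_zero)
  then show ?thesis
    unfolding Phi1_conj_eq_young_conj zeta_def
    by (simp add: young_conj_quotient_le young_conj_scale Delta2_young_conj)
qed

end
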